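(* Let $q\in\mathbb{C}^*$ with $|q|>1$. Define the entire functions $\widetilde{E}_0(x)=1$ and, for $m\geq1$, $\widetilde{E}_m(x)=f_1(x)\exp\left(\sum_{k=1}^m\frac{x^k}{k(q^k-1)}\right)$, where $f_1(x)=\sum_{n\geq0}\frac{x^n}{(q;q)_n}$. Then there exist constants $C_1,C_2>0$ such that for all integers $m\geq0$ and all $x\in\mathbb{C}$ with $|x|\leq1$, $$|1-\widetilde{E}_m(x)|\leq C_1(C_2|x|)^{m+1}.$$
   Context: $(q;q)_0=1$ and $(q;q)_n=\prod_{k=1}^n(1-q^k)$ for $n\geq1$. *)

theory Defs
  imports "HOL-Analysis.Analysis"
begin

definition qpoch :: "complex \<Rightarrow> nat \<Rightarrow> complex" where
  "qpoch q n = (\<Prod>k=1..n. 1 - q ^ k)"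

definition f1 :: "complex \<Rightarrow> complex \<Rightarrow> complex" where
  "f1 q x = (\<Sum>n. x ^ n / qpoch q n)"

definition Etilde :: "complex \<Rightarrow> nat \<Rightarrow> complex \<Rightarrow> complex" where
  "Etilde q m x = (if m = 0 then 1
     else f1 q x * exp (\<Sum>k=1..m. x ^ k / (of_nat k * (q ^ k - 1))))"

end

theory Submission
  imports Defs
begin

text \<open>
  The series \<open>f\<^sub>1\<close> satisfies \<open>f\<^sub>1(qy) = (1 - y) f\<^sub>1(y)\<close>, and
  \<open>L(y) = \<Sum>\<^sub>k\<^sub>\<ge>\<^sub>1 y\<^sup>k / (k (q\<^sup>k - 1))\<close> satisfies \<open>L(qy) - L(y) = -log (1 - y)\<close> for \<open>|y| < 1\<close>.
  Hence \<open>f\<^sub>1 exp L\<close> is invariant under \<open>x \<mapsto> x / q\<close> on the closed unit disc, and by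
  continuity at \<open>0\<close> it is identically \<open>1\<close> there: \<open>f\<^sub>1 = exp (- L)\<close>. Consequently
  \<open>Etilde\<^sub>m = exp (- T\<^sub>m)\<close>, where \<open>T\<^sub>m\<close> is the tail of \<open>L\<close> after the \<open>m\<close>-th term, and
  \<open>T\<^sub>m\<close> is dominated by a geometric series of ratio \<open>|x| / |q|\<close> starting at exponent \<open>m + 1\<close>.
\<close>

lemma qpoch_Suc: "qpoch q (Suc n) = qpoch q n * (1 - q ^ Suc n)"
  unfolding qpoch_def by (simp add: prod.nat_ivl_Suc' mult.commute)

lemma norm_power_minus_one_ge:
  fixes q :: complex
  shows "norm q ^ k - 1 \<le> norm (q ^ k - 1)"
  using norm_triangle_ineq2[of "q ^ k" 1] by (simp add: norm_power)

lemma power_neq_one_if_norm_gt_one: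
  fixes q :: complex
  assumes "norm q > 1" and "k > 0"
  shows "q ^ k \<noteq> 1"
  using one_less_power[OF assms] by (metis norm_one norm_power order.irrefl)

lemma summable_f1:
  assumes q: "norm q > 1"
  shows "summable (\<lambda>n. x ^ n / qpoch q n)"
proof -
  obtain N where N: "2 * norm x + 1 < norm q ^ N"
    using real_arch_pow[OF q] by blast
  have "norm (x ^ Suc n / qpoch q (Suc n)) \<le> 1/2 * norm (x ^ n / qpoch q n)" if "n \<ge> N" for n
  proof -
    from that have "norm q ^ N \<le> norm q ^ Suc n"
      using q by (intro power_increasing) auto
    then have big: "2 * norm x < norm (1 - q ^ Suc n)"
      using N norm_power_minus_one_ge[of q "Suc n"] by (simp add: norm_minus_commute)
    have "norm (x ^ Suc n / qpoch q (Suc n))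
        = norm (x ^ n / qpoch q n) * (norm x / norm (1 - q ^ Suc n))"
      by (simp add: qpoch_Suc norm_mult norm_divide)
    also have "\<dots> \<le> norm (x ^ n / qpoch q n) * (1/2)"
      using big by (intro mult_left_mono) (auto simp: divide_simps)
    finally show ?thesis
      by simp
  qed
  then show ?thesis
    by (intro summable_ratio_test[where c = "1/2"]) auto
qed

lemma f1_mult_q:
  assumes q: "norm q > 1"
  shows "f1 q (q * y) = (1 - y) * f1 q y"
proof -
  define g where "g n = y ^ n / qpoch q n - (q * y) ^ n / qpoch q n" for n
  have g_sums: "g sums (f1 q y - f1 q (q * y))"
    unfolding g_def f1_def by (intro sums_diff summable_sums summable_f1[OF q])
  have "g (Suc n) = y * (y ^ n / qpoch q n)" for n
  proof -
    have "1 - q ^ Suc n \<noteq> 0"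
      using power_neq_one_if_norm_gt_one[OF q, of "Suc n"] by auto
    moreover have "g (Suc n) = y ^ Suc n * (1 - q ^ Suc n) / (qpoch q n * (1 - q ^ Suc n))"
      unfolding g_def qpoch_Suc
      by (simp add: power_mult_distrib diff_divide_distrib right_diff_distrib)
    ultimately show ?thesis
      by simp
  qed
  then have "(\<lambda>n. g (Suc n)) sums (y * f1 q y)"
    unfolding f1_def using sums_mult[OF summable_sums[OF summable_f1[OF q]]] by simp
  moreover have "g 0 = 0"
    by (simp add: g_def)
  ultimately have "g sums (y * f1 q y)"
    by (simp add: sums_Suc_iff)
  with g_sums have "f1 q y - f1 q (q * y) = y * f1 q y"
    by (rule sums_unique2)
  then show ?thesis
    by (simp add: algebra_simps)
qed

lemma f1_0 [simp]: "f1 q 0 = 1"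
  using powser_zero[of "\<lambda>n. 1 / qpoch q n"] by (simp add: f1_def qpoch_def)

lemma isCont_f1:
  assumes "norm q > 1"
  shows "isCont (f1 q) x"
proof -
  have "isCont (\<lambda>x. \<Sum>n. (1 / qpoch q n) * x ^ n) x"
    by (rule isCont_powser_converges_everywhere) (simp add: summable_f1[OF assms])
  then show ?thesis
    by (simp add: f1_def[abs_def])
qed

text \<open>The term for \<open>k = 0\<close> is \<open>1 / 0 = 0\<close>, so the series effectively starts at \<open>k = 1\<close>.\<close>

definition neg_log_f1_term :: "complex \<Rightarrow> complex \<Rightarrow> nat \<Rightarrow> complex" where
  "neg_log_f1_term q z k = z ^ k / (of_nat k * (q ^ k - 1))"

definition neg_log_f1 :: "complex \<Rightarrow> complex \<Rightarrow> complex" where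
  "neg_log_f1 q z = (\<Sum>k. neg_log_f1_term q z k)"

lemma neg_log_f1_term_0 [simp]: "neg_log_f1_term q z 0 = 0"
  by (simp add: neg_log_f1_term_def)

lemma norm_neg_log_f1_term_le:
  assumes q: "norm q > 1"
  shows "norm (neg_log_f1_term q z k) \<le> norm q / (norm q - 1) * (norm z / norm q) ^ k"
proof (cases "k = 0")
  case False
  define a where "a = norm q"
  have a: "a > 1"
    using q by (simp add: a_def)
  have "a ^ k * (a - 1) / a \<le> a ^ k - 1"
  proof -
    have "1 \<le> a ^ (k - 1)"
      using a by simp
    also have "a ^ (k - 1) = a ^ k / a"
      using False a by (simp add: power_diff)
    finally show ?thesis
      using a by (simp add: field_simps)
  qed
  also have "\<dots> \<le> norm (q ^ k - 1)"
    using norm_power_minus_one_ge by (simp add: a_def)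
  also have "\<dots> \<le> norm (of_nat k * (q ^ k - 1))"
    using False by (simp add: norm_mult mult_le_cancel_right1)
  finally have denom: "a ^ k * (a - 1) / a \<le> norm (of_nat k * (q ^ k - 1))" .
  have "norm (neg_log_f1_term q z k) = norm z ^ k / norm (of_nat k * (q ^ k - 1))"
    by (simp add: neg_log_f1_term_def norm_divide norm_power)
  also have "\<dots> \<le> norm z ^ k / (a ^ k * (a - 1) / a)"
    using denom a by (intro frac_le) auto
  also have "\<dots> = a / (a - 1) * (norm z / a) ^ k"
    using a by (simp add: field_simps power_divide)
  finally show ?thesis
    by (simp add: a_def)
qed (use q in simp)

lemma summable_neg_log_f1_term:
  assumes q: "norm q > 1" and z: "norm z < norm q"
  shows "summable (neg_log_f1_term q z)"
proof (rule summable_comparison_test)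
  show "\<exists>N. \<forall>n\<ge>N. norm (neg_log_f1_term q z n) \<le> norm q / (norm q - 1) * (norm z / norm q) ^ n"
    using norm_neg_log_f1_term_le[OF q] by blast
  show "summable (\<lambda>n. norm q / (norm q - 1) * (norm z / norm q) ^ n)"
    using q z by (intro summable_mult summable_geometric) (simp add: divide_less_eq)
qed

lemma neg_log_f1_0 [simp]: "neg_log_f1 q 0 = 0"
  using powser_zero[of "\<lambda>k. 1 / (of_nat k * (q ^ k - 1))"]
  by (simp add: neg_log_f1_def neg_log_f1_term_def)

lemma isCont_neg_log_f1:
  assumes q: "norm q > 1" and x: "norm x < norm q"
  shows "isCont (neg_log_f1 q) x"
proof -
  define \<rho> where "\<rho> = (norm x + norm q) / 2"
  define K where "K = complex_of_real \<rho>"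
  have "norm K = \<rho>"
    unfolding K_def norm_of_real by (simp add: \<rho>_def)
  then have K: "norm x < norm K" "norm K < norm q"
    using x by (simp_all add: \<rho>_def)
  have "summable (\<lambda>k. 1 / (of_nat k * (q ^ k - 1)) * K ^ k)"
    using summable_neg_log_f1_term[OF q K(2)] by (simp add: neg_log_f1_term_def[abs_def])
  then have "isCont (\<lambda>z. \<Sum>k. 1 / (of_nat k * (q ^ k - 1)) * z ^ k) x"
    using K(1) by (rule isCont_powser)
  then show ?thesis
    by (simp add: neg_log_f1_def[abs_def] neg_log_f1_term_def[abs_def])
qed

lemma norm_neg_log_f1_tail_le:
  assumes q: "norm q > 1" and z: "norm z \<le> 1"
  shows "norm (\<Sum>j. neg_log_f1_term q z (j + m))
           \<le> (norm q / (norm q - 1))\<^sup>2 * (norm z / norm q) ^ m"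
proof -
  define a r where "a = norm q" and "r = norm z / a"
  have a: "a > 1"
    using q by (simp add: a_def)
  have r: "0 \<le> r" "r \<le> 1 / a"
    using z a by (auto simp: r_def divide_right_mono)
  moreover have "1 / a < 1"
    using a by simp
  ultimately have "r < 1"
    by linarith
  with r have geo: "(\<lambda>j. a / (a - 1) * r ^ (j + m)) sums (a / (a - 1) * r ^ m * (1 / (1 - r)))"
    using sums_mult[OF geometric_sums[of r], of "a / (a - 1) * r ^ m"]
    by (simp add: power_add mult_ac)
  have "norm (\<Sum>j. neg_log_f1_term q z (j + m)) \<le> (\<Sum>j. a / (a - 1) * r ^ (j + m))"
    using geo norm_neg_log_f1_term_le[OF q]
    by (intro norm_suminf_le) (auto simp: a_def r_def sums_iff)
  also have "\<dots> = a / (a - 1) * r ^ m * (1 / (1 - r))"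
    using geo by (simp add: sums_iff)
  also have "\<dots> \<le> a / (a - 1) * r ^ m * (a / (a - 1))"
  proof (intro mult_left_mono)
    have "(a - 1) / a \<le> 1 - r"
      using r a by (simp add: field_simps)
    then have "1 / (1 - r) \<le> 1 / ((a - 1) / a)"
      using a by (intro frac_le) auto
    then show "1 / (1 - r) \<le> a / (a - 1)"
      by simp
  qed (use a r in auto)
  finally show ?thesis
    by (simp add: a_def r_def power2_eq_square mult_ac)
qed

lemma neg_log_f1_mult_q:
  assumes q: "norm q > 1" and y: "norm y < 1"
  shows "neg_log_f1 q (q * y) = neg_log_f1 q y - ln (1 - y)"
proof -
  have qy: "norm (q * y) < norm q"
  proof -
    have "norm q * norm y < norm q * 1"
      using q y by (intro mult_strict_left_mono) auto
    then show ?thesis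
      by (simp add: norm_mult)
  qed
  have summable_qy: "summable (neg_log_f1_term q (q * y))"
    using q qy by (rule summable_neg_log_f1_term)
  have summable_y: "summable (neg_log_f1_term q y)"
    using q y by (intro summable_neg_log_f1_term) auto
  have "neg_log_f1_term q (q * y) k - neg_log_f1_term q y k = y ^ k / of_nat k" for k
  proof (cases "k = 0")
    case False
    then have "q ^ k - 1 \<noteq> 0"
      using power_neq_one_if_norm_gt_one[OF q] by auto
    moreover have "neg_log_f1_term q (q * y) k - neg_log_f1_term q y k
                     = y ^ k * (q ^ k - 1) / (of_nat k * (q ^ k - 1))"
      by (simp add: neg_log_f1_term_def power_mult_distrib diff_divide_distrib
                    right_diff_distrib mult_ac)
    ultimately show ?thesis
      by simp
  qed simp
  then have "(\<lambda>k. y ^ k / of_nat k) sums (neg_log_f1 q (q * y) - neg_log_f1 q y)"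
    using sums_diff[OF summable_sums[OF summable_qy] summable_sums[OF summable_y]]
    by (simp add: neg_log_f1_def)
  moreover have "(\<lambda>k. y ^ k / of_nat k) sums (- ln (1 - y))"
    using sums_minus[OF Ln_series'[of "- y"]] y by simp
  ultimately have "neg_log_f1 q (q * y) - neg_log_f1 q y = - ln (1 - y)"
    by (rule sums_unique2)
  then show ?thesis
    by (simp add: algebra_simps)
qed

lemma f1_exp_neg_log_f1_mult_q:
  assumes q: "norm q > 1" and y: "norm y < 1"
  shows "f1 q (q * y) * exp (neg_log_f1 q (q * y)) = f1 q y * exp (neg_log_f1 q y)"
proof -
  have "1 - y \<noteq> 0"
    using y by auto
  then have "exp (neg_log_f1 q (q * y)) = exp (neg_log_f1 q y) / (1 - y)"
    by (simp add: neg_log_f1_mult_q[OF q y] exp_diff)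
  then show ?thesis
    using \<open>1 - y \<noteq> 0\<close> by (simp add: f1_mult_q[OF q])
qed

lemma f1_eq_exp_neg_log_f1:
  assumes q: "norm q > 1" and x: "norm x \<le> 1"
  shows "f1 q x = exp (- neg_log_f1 q x)"
proof -
  define g where "g y = f1 q y * exp (neg_log_f1 q y)" for y
  have g_shrink: "g (x / q ^ n) = g x" for n
  proof (induction n)
    case (Suc n)
    have "norm (x / q ^ Suc n) < 1"
      using x one_less_power[OF q, of "Suc n"]
      by (simp add: norm_divide norm_power divide_less_eq del: power_Suc)
    then have "g (q * (x / q ^ Suc n)) = g (x / q ^ Suc n)"
      unfolding g_def by (rule f1_exp_neg_log_f1_mult_q[OF q])
    moreover have "q * (x / q ^ Suc n) = x / q ^ n"
      using q by auto
    ultimately show ?case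
      using Suc by simp
  qed simp
  have "isCont g 0"
    unfolding g_def using q by (intro continuous_intros isCont_f1 isCont_neg_log_f1) auto
  moreover have "(\<lambda>n. x / q ^ n) \<longlonglongrightarrow> 0"
  proof (rule tendsto_norm_zero_cancel)
    have "(\<lambda>n. norm x / norm q ^ n) \<longlonglongrightarrow> 0"
      using q by (rule LIMSEQ_divide_realpow_zero)
    then show "(\<lambda>n. norm (x / q ^ n)) \<longlonglongrightarrow> 0"
      by (simp add: norm_divide norm_power)
  qed
  ultimately have "(\<lambda>n. g (x / q ^ n)) \<longlonglongrightarrow> g 0"
    by (rule isCont_tendsto_compose)
  then have "g x = 1"
    using g_shrink by (simp add: g_def LIMSEQ_const_iff)
  then show ?thesis
    by (simp add: g_def exp_minus field_simps)
qed

lemma Etilde_eq_exp_neg_tail: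
  assumes q: "norm q > 1" and x: "norm x \<le> 1" and m: "m > 0"
  shows "Etilde q m x = exp (- (\<Sum>j. neg_log_f1_term q x (j + Suc m)))"
proof -
  define T where "T = (\<Sum>j. neg_log_f1_term q x (j + Suc m))"
  define S where "S = (\<Sum>k=1..m. neg_log_f1_term q x k)"
  have "summable (neg_log_f1_term q x)"
    using q x by (intro summable_neg_log_f1_term) auto
  then have "neg_log_f1 q x = T + (\<Sum>k<Suc m. neg_log_f1_term q x k)"
    unfolding neg_log_f1_def T_def by (rule suminf_split_initial_segment)
  moreover have "{..<Suc m} = insert 0 {1..m}"
    by auto
  ultimately have "neg_log_f1 q x = T + S"
    by (simp add: S_def)
  moreover have "Etilde q m x = f1 q x * exp S"
    using m by (simp add: Etilde_def S_def neg_log_f1_term_def)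
  ultimately have "Etilde q m x = exp (- (T + S)) * exp S"
    using f1_eq_exp_neg_log_f1[OF q x] by simp
  also have "\<dots> = exp (- T)"
    by (simp add: mult_exp_exp)
  finally show ?thesis
    unfolding T_def .
qed

lemma norm_one_minus_Etilde_le:
  assumes q: "norm q > 1" and x: "norm x \<le> 1"
  defines "K \<equiv> (norm q / (norm q - 1))\<^sup>2"
  shows "norm (1 - Etilde q m x) \<le> K * exp K * (norm x / norm q) ^ (m + 1)"
proof (cases "m = 0")
  case True
  have "K > 0"
    unfolding K_def using q by (intro zero_less_power divide_pos_pos) auto
  then show ?thesis
    using True by (simp add: Etilde_def)
next
  case False
  define T where "T = (\<Sum>j. neg_log_f1_term q x (j + Suc m))"
  have "K \<ge> 0"
    by (simp add: K_def)
  have T: "norm T \<le> K * (norm x / norm q) ^ Suc m"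
    unfolding T_def K_def by (rule norm_neg_log_f1_tail_le[OF q x])
  have "(norm x / norm q) ^ Suc m \<le> 1"
    using q x by (intro power_le_one) (auto simp: divide_le_eq)
  with T \<open>K \<ge> 0\<close> have "norm T \<le> K"
    by (meson dual_order.trans mult_left_le)
  have "Etilde q m x = exp (- T)"
    unfolding T_def using Etilde_eq_exp_neg_tail[OF q x] False by simp
  then have "norm (1 - Etilde q m x) = norm (exp (- T) - 1)"
    by (simp add: norm_minus_commute)
  also have "\<dots> \<le> exp (norm T) * norm T"
    using Taylor_exp_field[of "- T" 0] by simp
  also have "\<dots> \<le> exp K * (K * (norm x / norm q) ^ Suc m)"
    using T \<open>norm T \<le> K\<close> by (intro mult_mono) auto
  finally show ?thesis
    by (simp add: mult_ac)
qed

theorem lemma2p7: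
  fixes q :: complex
  assumes "q \<noteq> 0" and "norm q > 1"
  shows "\<exists>C1 C2 :: real. C1 > 0 \<and> C2 > 0 \<and>
           (\<forall>m::nat. \<forall>x::complex. norm x \<le> 1 \<longrightarrow>
              norm (1 - Etilde q m x) \<le> C1 * (C2 * norm x) ^ (m + 1))"
proof -
  define K where "K = (norm q / (norm q - 1))\<^sup>2"
  have "K > 0"
    unfolding K_def using assms(2) by (intro zero_less_power divide_pos_pos) auto
  then have "K * exp K > 0"
    by simp
  moreover have "1 / norm q > 0"
    using assms(2) by (intro divide_pos_pos) auto
  ultimately show ?thesis
    using norm_one_minus_Etilde_le[OF assms(2)]
    by (intro exI[of _ "K * exp K"] exI[of _ "1 / norm q"]) (simp add: K_def)
qed

end
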